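(* For $w,b\ge0$ with $w+b\ge1$ let $H_{w,b}=H_{w,b}(X,Y)$ be the component of the Hausdorff series $\log(e^Xe^Y)$ of degree $w$ in $X$ and degree $b$ in $Y$ (so $H_{1,0}=X$, $H_{0,1}=Y$, $H_{w,0}=0$ for $w\ge2$, $H_{0,b}=0$ for $b\ge2$). Then for all $w,b\ge0$ with $w+b\ge1$, $$(w+1)H_{w+1,b}=\tfrac12[X,H_{w,b}]+\sum_{r\ge1}\frac{B_{2r}}{(2r)!}\sum[H_{w_1,b_1},[H_{w_2,b_2},[\ldots,[H_{w_{2r},b_{2r}},X]\ldots]]],$$ the inner sum being over all $2r$-tuples of pairs $(w_i,b_i)$ of nonnegative integers with $w_i+b_i\ge1$, $\sum_iw_i=w$, $\sum_ib_i=b$; and for all $w\ge0$, $b\ge1$, $$b\,H_{w+1,b}=-\tfrac12[Y,H_{w+1,b-1}]+\sum_{r\ge1}\frac{B_{2r}}{(2r)!}\sum[H_{w_1,b_1},[H_{w_2,b_2},[\ldots,[H_{w_{2r},b_{2r}},Y]\ldots]]],$$ the inner sum being over all $2r$-tuples of pairs with $w_i+b_i\ge1$, $\sum_iw_i=w+1$, $\sum_ib_i=b-1$. (All sums are finite.)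
   Context: $X,Y$ generate a free Lie algebra over $\mathbb Q$, embedded in the completed free associative algebra $\mathbb Q\langle\langle X,Y\rangle\rangle$, where $\log(e^Xe^Y)$ is a (completed) Lie series. Bernoulli numbers are defined by $t/(e^t-1)=\sum_NB_Nt^N/N!$, so $B_2=1/6$. *)

theory Defs
  imports "HOL-Computational_Algebra.Formal_Power_Series" "HOL-Library.Function_Algebras"
begin

text \<open>Completed free associative algebra Q<<X,Y>>: a series is a function from words
  to rational coefficients. Letters: False = X, True = Y.\<close>

type_synonym ncs = "bool list \<Rightarrow> rat"

definition ncX :: ncs where "ncX = (\<lambda>u. if u = [False] then 1 else 0)"
definition ncY :: ncs where "ncY = (\<lambda>u. if u = [True] then 1 else 0)"
definition ncone :: ncs where "ncone = (\<lambda>u. if u = [] then 1 else 0)"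

definition ncmul :: "ncs \<Rightarrow> ncs \<Rightarrow> ncs" where
  "ncmul f g = (\<lambda>u. \<Sum>i\<le>length u. f (take i u) * g (drop i u))"

definition ncsmult :: "rat \<Rightarrow> ncs \<Rightarrow> ncs" where
  "ncsmult c f = (\<lambda>u. c * f u)"

primrec ncpow :: "ncs \<Rightarrow> nat \<Rightarrow> ncs" where
  "ncpow f 0 = ncone"
| "ncpow f (Suc n) = ncmul f (ncpow f n)"

text \<open>exp f = sum_n f^n/n! (for f without constant term; coefficient of a word u
  only receives contributions from n \<le> length u).\<close>
definition ncexp :: "ncs \<Rightarrow> ncs" where
  "ncexp f = (\<lambda>u. \<Sum>n\<le>length u. ncpow f n u / fact n)"

definition nclog1p :: "ncs \<Rightarrow> ncs" where
  "nclog1p g = (\<lambda>u. \<Sum>n\<in>{1..length u}. (-1) ^ (n + 1) * ncpow g n u / of_nat n)"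

definition hausdorff :: ncs where
  "hausdorff = nclog1p (ncmul (ncexp ncX) (ncexp ncY) - ncone)"

definition H :: "nat \<Rightarrow> nat \<Rightarrow> ncs" where
  "H w b = (\<lambda>u. if length (filter Not u) = w \<and> length (filter id u) = b
                 then hausdorff u else 0)"

definition bracket :: "ncs \<Rightarrow> ncs \<Rightarrow> ncs" where
  "bracket f g = ncmul f g - ncmul g f"

definition bernoulli :: "nat \<Rightarrow> rat" where
  "bernoulli N = fact N * fps_nth (fps_X / (fps_exp 1 - 1)) N"

definition tuples :: "nat \<Rightarrow> nat \<Rightarrow> nat \<Rightarrow> (nat \<times> nat) list set" where
  "tuples r w b = {ps. length ps = 2 * r \<and> (\<forall>p\<in>set ps. fst p + snd p \<ge> 1)
                     \<and> sum_list (map fst ps) = w \<and> sum_list (map snd ps) = b}"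

definition nested :: "(nat \<times> nat) list \<Rightarrow> ncs \<Rightarrow> ncs" where
  "nested ps Z = foldr (\<lambda>p acc. bracket (H (fst p) (snd p)) acc) ps Z"

end

theory Submission
  imports Defs
begin

text \<open>
  Let \<open>D_X\<close> (resp. \<open>D_Y\<close>) be the derivation of the completed free algebra
  that multiplies every word by its number of letters \<open>X\<close> (resp. \<open>Y\<close>). For a series \<open>h\<close>
  without constant term, \<open>D(exp h) = K_h(D h) exp h\<close> with \<open>K_h = (exp(ad h) - 1)/ad h\<close>,
  and \<open>K_h\<close> is inverted by the Bernoulli operator \<open>B_h = ad h/(exp(ad h) - 1)\<close>, i.e.
  \<open>B_h = \<Sum>i. B_i/i! (ad h)^i\<close>. The Hausdorff series satisfies \<open>exp h = exp X exp Y\<close>,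
  hence \<open>D_X(exp h) = X exp h\<close> and \<open>D_Y(exp h) = exp h Y\<close>, which yields the differential
  equations \<open>D_X h = B_h X\<close> and \<open>D_Y h = B_(-h) Y\<close>. Taking the component of bidegree
  \<open>(w+1,b)\<close>, where \<open>D_X\<close> and \<open>D_Y\<close> act as multiplication by \<open>w+1\<close> and \<open>b\<close>, and using
  \<open>B_1 = -1/2\<close> and \<open>B_(2r+1) = 0\<close> for \<open>r \<ge> 1\<close> gives both recursions.
\<close>

unbundle fps_syntax

section \<open>The ring of noncommutative series\<close>

lemma ncmul_Nil [simp]: "ncmul f g [] = f [] * g []"
  by (simp add: ncmul_def)

text \<open>Peeling off the first letter: the recursion behind associativity of \<open>ncmul\<close>.\<close>
lemma ncmul_Cons: "ncmul f g (a # u) = f [] * g (a # u) + ncmul (\<lambda>v. f (a # v)) g u"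
  unfolding ncmul_def by (simp add: sum.atMost_Suc_shift del: sum.atMost_Suc)

lemma ncmul_linear_left:
  "ncmul (\<lambda>v. c * p v + q v) h u = c * ncmul p h u + ncmul q h u"
  unfolding ncmul_def by (simp add: algebra_simps sum.distrib sum_distrib_left)

lemma ncmul_assoc: "ncmul f (ncmul g h) u = ncmul (ncmul f g) h u"
proof (induction u arbitrary: f g h)
  case Nil
  then show ?case by simp
next
  case (Cons a u)
  have shift: "(\<lambda>v. ncmul f g (a # v)) = (\<lambda>v. f [] * g (a # v) + ncmul (\<lambda>v. f (a # v)) g v)"
    by (simp add: ncmul_Cons)
  show ?case
    using Cons.IH[of "\<lambda>v. f (a # v)" g h]
    by (simp add: ncmul_Cons shift ncmul_linear_left algebra_simps)
qed

lemma ncmul_one_left: "ncmul ncone f u = f u"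
  unfolding ncmul_def ncone_def by (simp add: atMost_atLeast0 sum.atLeast_Suc_atMost)

lemma ncmul_one_right: "ncmul f ncone u = f u"
  by (induction u arbitrary: f) (simp_all add: ncmul_Cons ncone_def)

lemma ncmul_add_left: "ncmul (\<lambda>v. f v + g v) h u = ncmul f h u + ncmul g h u"
  unfolding ncmul_def by (simp add: algebra_simps sum.distrib)

lemma ncmul_add_right: "ncmul h (\<lambda>v. f v + g v) u = ncmul h f u + ncmul h g u"
  unfolding ncmul_def by (simp add: algebra_simps sum.distrib)

text \<open>A copy of the series type on which \<open>ncmul\<close> is the ring multiplication, so that
  the generic ring library (powers, sums, \<open>algebra_simps\<close>) becomes available.\<close>
typedef nc = "UNIV :: ncs set" by auto
setup_lifting type_definition_nc

instantiation nc :: ring_1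
begin
lift_definition zero_nc :: nc is "\<lambda>u. 0" .
lift_definition one_nc :: nc is ncone .
lift_definition plus_nc :: "nc \<Rightarrow> nc \<Rightarrow> nc" is "\<lambda>f g u. f u + g u" .
lift_definition minus_nc :: "nc \<Rightarrow> nc \<Rightarrow> nc" is "\<lambda>f g u. f u - g u" .
lift_definition uminus_nc :: "nc \<Rightarrow> nc" is "\<lambda>f u. - f u" .
lift_definition times_nc :: "nc \<Rightarrow> nc \<Rightarrow> nc" is ncmul .
instance
proof
  fix a b c :: nc
  show "a * b * c = a * (b * c)" by transfer (simp add: ncmul_assoc fun_eq_iff)
  show "1 * a = a" by transfer (simp add: ncmul_one_left fun_eq_iff)
  show "a * 1 = a" by transfer (simp add: ncmul_one_right fun_eq_iff)
  show "(a + b) * c = a * c + b * c" by transfer (simp add: ncmul_add_left fun_eq_iff)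
  show "a * (b + c) = a * b + a * c" by transfer (simp add: ncmul_add_right fun_eq_iff)
  show "a + b + c = a + (b + c)" by transfer (simp add: algebra_simps)
  show "a + b = b + a" by transfer (simp add: algebra_simps)
  show "0 + a = a" by transfer simp
  show "- a + a = 0" by transfer simp
  show "a - b = a + - b" by transfer simp
  show "(0::nc) \<noteq> 1" by transfer (auto simp: ncone_def fun_eq_iff)
qed
end

abbreviation coef :: "nc \<Rightarrow> ncs" where "coef \<equiv> Rep_nc"

lemma nc_eq_iff: "a = b \<longleftrightarrow> (\<forall>u. coef a u = coef b u)"
  by (metis Rep_nc_inject ext)

lemma coef_Abs [simp]: "coef (Abs_nc f) = f"
  by (simp add: Abs_nc_inverse)

lemma coef_0 [simp]: "coef 0 u = 0" by transfer simp
lemma coef_1: "coef 1 = ncone" by transfer simp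
lemma coef_add [simp]: "coef (a + b) u = coef a u + coef b u" by transfer simp
lemma coef_diff [simp]: "coef (a - b) u = coef a u - coef b u" by transfer simp
lemma coef_uminus [simp]: "coef (- a) u = - coef a u" by transfer simp
lemma coef_mult: "coef (a * b) = ncmul (coef a) (coef b)" by transfer simp
lemma coef_sum [simp]: "coef (sum f A) u = (\<Sum>x\<in>A. coef (f x) u)"
  by (induction A rule: infinite_finite_induct) auto
lemma coef_power: "coef (a ^ n) = ncpow (coef a) n"
  by (induction n) (simp_all add: coef_1 coef_mult)

lift_definition scal :: "rat \<Rightarrow> nc" is "\<lambda>c u. if u = [] then c else 0" .

lemma coef_scal: "coef (scal c) u = (if u = [] then c else 0)"
  by transfer simp

lemma coef_scal_mult [simp]: "coef (scal c * a) u = c * coef a u"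
proof -
  have zero: "ncmul (\<lambda>v. 0) f v = 0" for f v by (simp add: ncmul_def)
  have "ncmul (\<lambda>u. if u = [] then c else 0) f u = c * f u" for f
    by (cases u) (simp_all add: ncmul_Cons zero)
  then show ?thesis by transfer simp
qed

lemma coef_mult_scal [simp]: "coef (a * scal c) u = coef a u * c"
proof -
  have "ncmul f (\<lambda>u. if u = [] then c else 0) u = f u * c" for f
    by (induction u arbitrary: f) (simp_all add: ncmul_Cons)
  then show ?thesis by transfer simp
qed

lemma scal_commute: "scal c * a = a * scal c"
  by (simp add: nc_eq_iff mult.commute)

lemma scal_mult_left_commute: "a * (scal c * b) = scal c * (a * b)"
  by (metis scal_commute mult.assoc)

lemma scal_mult: "scal (c * d) = scal c * scal d" by (simp add: nc_eq_iff coef_scal)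
lemma scal_add: "scal (c + d) = scal c + scal d" by (simp add: nc_eq_iff coef_scal)
lemma scal_uminus: "scal (- c) = - scal c" by (simp add: nc_eq_iff coef_scal)
lemma scal_1 [simp]: "scal 1 = 1" by (simp add: nc_eq_iff coef_scal coef_1 ncone_def)
lemma scal_0 [simp]: "scal 0 = 0" by (simp add: nc_eq_iff coef_scal)
lemma scal_power: "scal (c ^ n) = scal c ^ n" by (induction n) (simp_all add: scal_mult)
lemma scal_sum: "scal (sum f A) = (\<Sum>x\<in>A. scal (f x))"
  by (induction A rule: infinite_finite_induct) (auto simp: scal_add)
lemma scal_of_nat: "scal (of_nat n) = of_nat n" by (induction n) (simp_all add: scal_add)

lemma scal_mult_mult: "(scal a * x) * (scal b * y) = scal (a * b) * (x * y)"
  by (simp only: mult.assoc scal_mult_left_commute[of x] scal_mult)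

section \<open>Order and admissible infinite sums\<close>

definition order_ge :: "nc \<Rightarrow> nat \<Rightarrow> bool" where
  "order_ge a k \<longleftrightarrow> (\<forall>u. length u < k \<longrightarrow> coef a u = 0)"

lemma order_ge_0 [simp]: "order_ge a 0" by (simp add: order_ge_def)
lemma order_ge_zero [simp]: "order_ge 0 k" by (simp add: order_ge_def)
lemma order_ge_mono: "order_ge a k \<Longrightarrow> m \<le> k \<Longrightarrow> order_ge a m" by (simp add: order_ge_def)
lemma order_ge_diff: "order_ge a k \<Longrightarrow> order_ge b k \<Longrightarrow> order_ge (a - b) k" by (simp add: order_ge_def)
lemma order_ge_uminus: "order_ge a k \<Longrightarrow> order_ge (- a) k" by (simp add: order_ge_def)
lemma order_ge_scal_mult: "order_ge a k \<Longrightarrow> order_ge (scal c * a) k" by (simp add: order_ge_def)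

lemma order_ge_mult:
  assumes a: "order_ge a k" and b: "order_ge b m"
  shows "order_ge (a * b) (k + m)"
  unfolding order_ge_def
proof (intro allI impI)
  fix u :: "bool list"
  assume len: "length u < k + m"
  have vanish: "coef a (take i u) * coef b (drop i u) = 0" for i
  proof (cases "length (take i u) < k")
    case True
    then show ?thesis using a by (simp add: order_ge_def)
  next
    case False
    then have "length (drop i u) < m" using len by simp
    then show ?thesis using b by (simp add: order_ge_def)
  qed
  show "coef (a * b) u = 0" by (simp add: coef_mult ncmul_def vanish)
qed

lemma order_ge_power: "order_ge a 1 \<Longrightarrow> order_ge (a ^ n) n"
proof (induction n)
  case (Suc n)
  then show ?case using order_ge_mult[of a 1 "a ^ n" n] by simp
qed simp

text \<open>It is the true infinite sum for admissible sequences, whose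
  \<open>n\<close>-th term has order at least \<open>n\<close>.\<close>
lift_definition series :: "(nat \<Rightarrow> nc) \<Rightarrow> nc" is
  "\<lambda>a u. \<Sum>n\<le>length u. Rep_nc (a n) u" .

definition admissible :: "(nat \<Rightarrow> nc) \<Rightarrow> bool" where
  "admissible a \<longleftrightarrow> (\<forall>n. order_ge (a n) n)"

lemma coef_series: "coef (series a) u = (\<Sum>n\<le>length u. coef (a n) u)"
  by transfer simp

lemma coef_series_upto:
  assumes "admissible a" "length u \<le> N"
  shows "coef (series a) u = (\<Sum>n\<le>N. coef (a n) u)"
  unfolding coef_series
  by (rule sum.mono_neutral_left) (use assms in \<open>auto simp: admissible_def order_ge_def\<close>)

lemma series_diff: "series (\<lambda>n. a n - b n) = series a - series b"
  by (simp add: nc_eq_iff coef_series sum_subtractf)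
lemma series_uminus: "series (\<lambda>n. - a n) = - series a"
  by (simp add: nc_eq_iff coef_series sum_negf)
lemma series_zero: "series (\<lambda>n. 0) = 0"
  by (simp add: nc_eq_iff coef_series)
lemma series_add: "series (\<lambda>n. a n + b n) = series a + series b"
  by (simp add: nc_eq_iff coef_series sum.distrib)

lemma order_ge_series: "(\<And>n. order_ge (a n) k) \<Longrightarrow> order_ge (series a) k"
  unfolding order_ge_def coef_series by simp

lemma series_mult_left:
  assumes "admissible a"
  shows "c * series a = series (\<lambda>n. c * a n)"
proof (subst nc_eq_iff, intro allI)
  fix u :: "bool list"
  have "coef (c * series a) u = (\<Sum>i\<le>length u. coef c (take i u) * coef (series a) (drop i u))"
    by (simp add: coef_mult ncmul_def)
  also have "\<dots> = (\<Sum>i\<le>length u. coef c (take i u) * (\<Sum>n\<le>length u. coef (a n) (drop i u)))"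
    by (intro sum.cong refl) (simp add: coef_series_upto[OF assms, of _ "length u"])
  also have "\<dots> = (\<Sum>n\<le>length u. coef (c * a n) u)"
    by (simp add: coef_mult ncmul_def sum_distrib_left) (rule sum.swap)
  finally show "coef (c * series a) u = coef (series (\<lambda>n. c * a n)) u"
    by (simp add: coef_series)
qed

lemma series_mult_right:
  assumes "admissible a"
  shows "series a * c = series (\<lambda>n. a n * c)"
proof (subst nc_eq_iff, intro allI)
  fix u :: "bool list"
  have "coef (series a * c) u = (\<Sum>i\<le>length u. coef (series a) (take i u) * coef c (drop i u))"
    by (simp add: coef_mult ncmul_def)
  also have "\<dots> = (\<Sum>i\<le>length u. (\<Sum>n\<le>length u. coef (a n) (take i u)) * coef c (drop i u))"
    by (intro sum.cong refl) (simp add: coef_series_upto[OF assms, of _ "length u"])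
  also have "\<dots> = (\<Sum>n\<le>length u. coef (a n * c) u)"
    by (simp add: coef_mult ncmul_def sum_distrib_right) (rule sum.swap)
  finally show "coef (series a * c) u = coef (series (\<lambda>n. a n * c)) u"
    by (simp add: coef_series)
qed

lemma series_cauchy:
  assumes "\<And>j k. order_ge (c j k) (j + k)"
  shows "series (\<lambda>j. series (\<lambda>k. c j k)) = series (\<lambda>n. \<Sum>j\<le>n. c j (n - j))"
proof (subst nc_eq_iff, intro allI)
  fix u :: "bool list"
  define N where "N = length u"
  have "coef (series (\<lambda>j. series (\<lambda>k. c j k))) u = (\<Sum>(j,k)\<in>{..N}\<times>{..N}. coef (c j k) u)"
    unfolding N_def coef_series by (simp add: sum.cartesian_product)
  also have "\<dots> = (\<Sum>(j,k)\<in>{(j,k). j + k \<le> N}. coef (c j k) u)"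
  proof (rule sum.mono_neutral_right)
    show "\<forall>i\<in>{..N} \<times> {..N} - {(j, k). j + k \<le> N}. (case i of (j, k) \<Rightarrow> coef (c j k) u) = 0"
    proof
      fix i assume "i \<in> {..N} \<times> {..N} - {(j, k). j + k \<le> N}"
      then obtain j k where "i = (j, k)" "N < j + k" by auto
      then show "(case i of (j, k) \<Rightarrow> coef (c j k) u) = 0"
        using assms[of j k] unfolding order_ge_def N_def by simp
    qed
  qed auto
  also have "\<dots> = (\<Sum>n\<le>N. \<Sum>j\<le>n. coef (c j (n - j)) u)"
    by (rule sum.triangle_reindex_eq)
  finally show "coef (series (\<lambda>j. series (\<lambda>k. c j k))) u = coef (series (\<lambda>n. \<Sum>j\<le>n. c j (n - j))) u"
    unfolding N_def coef_series by simp
qed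

lemma series_triangle:
  assumes "\<And>k n. n < k \<Longrightarrow> c k n = 0"
  shows "series (\<lambda>k. series (\<lambda>n. c k n)) = series (\<lambda>n. \<Sum>k\<le>n. c k n)"
proof (subst nc_eq_iff, intro allI)
  fix u :: "bool list"
  define N where "N = length u"
  have "coef (series (\<lambda>k. series (\<lambda>n. c k n))) u = (\<Sum>k\<le>N. \<Sum>n\<le>N. coef (c k n) u)"
    unfolding N_def coef_series by simp
  also have "\<dots> = (\<Sum>n\<le>N. \<Sum>k\<le>N. coef (c k n) u)"
    by (rule sum.swap)
  also have "\<dots> = (\<Sum>n\<le>N. \<Sum>k\<le>n. coef (c k n) u)"
    by (intro sum.cong refl sum.mono_neutral_right) (auto simp: assms)
  finally show "coef (series (\<lambda>k. series (\<lambda>n. c k n))) u = coef (series (\<lambda>n. \<Sum>k\<le>n. c k n)) u"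
    unfolding N_def coef_series by simp
qed

lemma series_shift:
  assumes "admissible a"
  shows "series a = a 0 + series (\<lambda>n. a (Suc n))"
proof (subst nc_eq_iff, intro allI)
  fix u :: "bool list"
  have "coef (series a) u = (\<Sum>n\<le>Suc (length u). coef (a n) u)"
    by (rule coef_series_upto[OF assms]) simp
  also have "\<dots> = coef (a 0) u + (\<Sum>n\<le>length u. coef (a (Suc n)) u)"
    by (simp add: sum.atMost_Suc_shift del: sum.atMost_Suc)
  finally show "coef (series a) u = coef (a 0 + series (\<lambda>n. a (Suc n))) u"
    by (simp add: coef_series)
qed

lemma series_finite:
  assumes "\<And>n. n > N \<Longrightarrow> a n = 0" "admissible a"
  shows "series a = (\<Sum>n\<le>N. a n)"
proof (subst nc_eq_iff, intro allI)
  fix u :: "bool list"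
  have "coef (series a) u = (\<Sum>n\<le>max N (length u). coef (a n) u)"
    by (rule coef_series_upto[OF assms(2)]) simp
  also have "\<dots> = (\<Sum>n\<le>N. coef (a n) u)"
    by (rule sum.mono_neutral_right) (use assms in auto)
  finally show "coef (series a) u = coef (\<Sum>n\<le>N. a n) u" by simp
qed

section \<open>Evaluating formal power series at series without constant term\<close>

definition eval :: "rat fps \<Rightarrow> nc \<Rightarrow> nc" where
  "eval F g = series (\<lambda>n. scal (F $ n) * g ^ n)"

lemma admissible_eval: "order_ge g 1 \<Longrightarrow> admissible (\<lambda>n. scal (F $ n) * g ^ n)"
  by (simp add: admissible_def order_ge_scal_mult order_ge_power)

lemma eval_add: "eval (F + G) g = eval F g + eval G g"
  by (simp add: eval_def scal_add distrib_right series_add)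

lemma eval_1: "order_ge g 1 \<Longrightarrow> eval 1 g = 1"
  unfolding eval_def by (subst series_finite[where N=0, OF _ admissible_eval]) auto

lemma eval_X: "order_ge g 1 \<Longrightarrow> eval fps_X g = g"
  unfolding eval_def by (subst series_finite[where N=1, OF _ admissible_eval]) auto

lemma eval_mult:
  assumes g: "order_ge g 1"
  shows "eval (F * G) g = eval F g * eval G g"
proof -
  have "eval F g * eval G g = series (\<lambda>j. scal (F $ j) * g ^ j * eval G g)"
    unfolding eval_def by (rule series_mult_right[OF admissible_eval[OF g]])
  also have "\<dots> = series (\<lambda>j. series (\<lambda>k. scal (F $ j) * g ^ j * (scal (G $ k) * g ^ k)))"
    unfolding eval_def by (simp only: series_mult_left[OF admissible_eval[OF g]])
  also have "\<dots> = series (\<lambda>n. \<Sum>j\<le>n. scal (F $ j) * g ^ j * (scal (G $ (n - j)) * g ^ (n - j)))"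
    by (rule series_cauchy) (intro order_ge_mult order_ge_scal_mult order_ge_power g)
  also have "\<dots> = series (\<lambda>n. scal ((F * G) $ n) * g ^ n)"
  proof -
    have "scal (F $ j) * g ^ j * (scal (G $ (n - j)) * g ^ (n - j)) = scal (F $ j * G $ (n - j)) * g ^ n"
      if "j \<le> n" for j n
      using that by (simp add: scal_mult_mult flip: power_add)
    then show ?thesis
      by (simp add: fps_mult_nth atMost_atLeast0 scal_sum sum_distrib_right)
  qed
  finally show ?thesis by (simp add: eval_def)
qed

lemma eval_power: "order_ge g 1 \<Longrightarrow> eval (F ^ k) g = eval F g ^ k"
  by (induction k) (simp_all add: eval_1 eval_mult)

lemma order_ge_eval:
  assumes g: "order_ge g 1" and L: "L $ 0 = 0"
  shows "order_ge (eval L g) 1"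
  unfolding eval_def
proof (rule order_ge_series)
  fix n
  show "order_ge (scal (L $ n) * g ^ n) 1"
  proof (cases n)
    case 0
    then show ?thesis using L by simp
  next
    case (Suc m)
    have "order_ge (scal (L $ n) * g ^ n) n" by (intro order_ge_scal_mult order_ge_power g)
    then show ?thesis by (rule order_ge_mono) (simp add: Suc)
  qed
qed

lemma eval_compose:
  assumes g: "order_ge g 1" and L: "L $ 0 = 0"
  shows "eval (F oo L) g = eval F (eval L g)"
proof -
  have "eval F (eval L g) = series (\<lambda>k. scal (F $ k) * eval (L ^ k) g)"
    unfolding eval_def[of F] by (simp add: eval_power[OF g])
  also have "\<dots> = series (\<lambda>k. series (\<lambda>n. scal (F $ k) * (scal ((L ^ k) $ n) * g ^ n)))"
    unfolding eval_def by (simp add: series_mult_left[OF admissible_eval[OF g]])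
  also have "\<dots> = series (\<lambda>n. \<Sum>k\<le>n. scal (F $ k) * (scal ((L ^ k) $ n) * g ^ n))"
    by (rule series_triangle) (simp add: startsby_zero_power_prefix[OF L])
  also have "\<dots> = series (\<lambda>n. scal ((F oo L) $ n) * g ^ n)"
    by (simp add: fps_compose_nth atMost_atLeast0 scal_sum sum_distrib_right scal_mult mult.assoc)
  finally show ?thesis by (simp add: eval_def)
qed

definition nexp :: "nc \<Rightarrow> nc" where "nexp a = eval (fps_exp 1) a"

lemma nexp_series: "nexp h = series (\<lambda>n. scal (1 / fact n) * h ^ n)"
  by (simp add: nexp_def eval_def)

lemma Abs_ncexp: "Abs_nc (ncexp f) = nexp (Abs_nc f)"
  by (simp add: nc_eq_iff nexp_def eval_def coef_series ncexp_def coef_power)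

lemma Abs_nclog1p: "Abs_nc (nclog1p f) = eval (fps_ln 1) (Abs_nc f)"
proof (subst nc_eq_iff, intro allI)
  fix u :: "bool list"
  have "coef (eval (fps_ln 1) (Abs_nc f)) u = (\<Sum>n\<le>length u. fps_ln 1 $ n * ncpow f n u)"
    by (simp add: eval_def coef_series coef_power)
  also have "\<dots> = (\<Sum>n\<in>{1..length u}. fps_ln 1 $ n * ncpow f n u)"
    by (rule sum.mono_neutral_right) (auto simp: fps_ln_nth not_le)
  also have "\<dots> = nclog1p f u"
    unfolding nclog1p_def
  proof (rule sum.cong[OF refl])
    fix n assume "n \<in> {1..length u}"
    then obtain k where k: "n = Suc k" by (cases n) auto
    then have "fps_ln 1 $ n = (-1::rat) ^ (n + 1) / of_nat n"
      by (simp add: fps_ln_nth)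
    then show "fps_ln 1 $ n * ncpow f n u = (-1) ^ (n + 1) * ncpow f n u / of_nat n"
      by simp
  qed
  finally show "coef (Abs_nc (nclog1p f)) u = coef (eval (fps_ln 1) (Abs_nc f)) u" by simp
qed

lemma fps_exp_compose_ln: "fps_exp (1::rat) oo fps_ln 1 = 1 + fps_X"
proof -
  have "(fps_exp (1::rat) - 1) oo fps_ln 1 = fps_X"
    using fps_ln_fps_exp_inv[of "1::rat"] fps_inv_right[of "fps_exp (1::rat) - 1"] by simp
  then have "(fps_exp 1 oo fps_ln 1) - 1 = (fps_X::rat fps)" by (simp add: fps_compose_sub_distrib)
  then show ?thesis by (metis diff_eq_eq add.commute)
qed

lemma nexp_eval_ln:
  assumes "order_ge g 1" shows "nexp (eval (fps_ln 1) g) = 1 + g"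
  unfolding nexp_def
  by (simp add: eval_compose[OF assms, symmetric] fps_exp_compose_ln eval_add
      eval_1[OF assms] eval_X[OF assms])

lemma nexp_uminus: "nexp (- a) = eval (fps_exp (-1)) a"
proof -
  have "scal (fps_exp 1 $ n) * (- a) ^ n = scal (fps_exp (- 1) $ n) * a ^ n" for n
  proof -
    have sign: "scal ((-1) ^ n) = (-1) ^ n" by (simp add: scal_power scal_uminus)
    have "(- a) ^ n = scal ((-1) ^ n) * a ^ n" unfolding sign by (rule power_minus)
    then have "scal (fps_exp 1 $ n) * (- a) ^ n = scal (fps_exp 1 $ n * (-1) ^ n) * a ^ n"
      by (simp only: scal_mult mult.assoc)
    also have "fps_exp 1 $ n * (-1) ^ n = fps_exp (- 1::rat) $ n" by (simp add: field_simps)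
    finally show ?thesis .
  qed
  then show ?thesis unfolding nexp_def eval_def by simp
qed

lemma nexp_inverse:
  assumes "order_ge a 1" shows "nexp (- a) * nexp a = 1" "nexp a * nexp (- a) = 1"
proof -
  have inv: "fps_exp (-1) * fps_exp 1 = (1::rat fps)" "fps_exp 1 * fps_exp (-1) = (1::rat fps)"
    using fps_exp_add_mult[of "-1::rat" 1] fps_exp_add_mult[of "1::rat" "-1"] by simp_all
  show "nexp (- a) * nexp a = 1"
    unfolding nexp_uminus unfolding nexp_def eval_mult[OF assms, symmetric] inv
    by (rule eval_1[OF assms])
  show "nexp a * nexp (- a) = 1"
    unfolding nexp_uminus unfolding nexp_def eval_mult[OF assms, symmetric] inv
    by (rule eval_1[OF assms])
qed

lemma nexp_commute: "order_ge a 1 \<Longrightarrow> a * nexp a = nexp a * a"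
  unfolding nexp_series
  by (simp add: series_mult_left series_mult_right admissible_eval[of a "fps_exp 1", simplified]
      mult.assoc scal_mult_left_commute power_commutes)

section \<open>Bernoulli numbers\<close>

text \<open>\<open>exp_quotient = (exp t - 1)/t\<close>; the Bernoulli generating function is its inverse.\<close>
definition exp_quotient :: "rat fps" where "exp_quotient = Abs_fps (\<lambda>k. 1 / fact (Suc k))"
definition bernoulli_fps :: "rat fps" where "bernoulli_fps = fps_X / (fps_exp 1 - 1)"

lemma X_mult_exp_quotient: "fps_X * exp_quotient = fps_exp 1 - 1"
proof (rule fps_ext)
  fix n
  show "(fps_X * exp_quotient) $ n = (fps_exp 1 - 1) $ n"
    by (cases n) (simp_all add: exp_quotient_def fps_X_mult_nth algebra_simps)
qed

lemma bernoulli_fps_mult_exp_quotient: "bernoulli_fps * exp_quotient = 1"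
proof -
  have q0: "exp_quotient $ 0 \<noteq> 0" by (simp add: exp_quotient_def)
  then have nonzero: "fps_exp 1 - 1 \<noteq> (0::rat fps)"
    unfolding X_mult_exp_quotient[symmetric] by auto
  have "fps_X = (fps_exp 1 - 1) * inverse exp_quotient"
    unfolding X_mult_exp_quotient[symmetric] mult.assoc using q0 by (simp add: inverse_mult_eq_1')
  then have "bernoulli_fps = ((fps_exp 1 - 1) * inverse exp_quotient) / (fps_exp 1 - 1)"
    by (simp add: bernoulli_fps_def)
  also have "\<dots> = inverse exp_quotient" using nonzero by simp
  finally show ?thesis using inverse_mult_eq_1[OF q0] by simp
qed

lemma bernoulli_div_fact: "bernoulli n / fact n = bernoulli_fps $ n"
  by (simp add: bernoulli_def bernoulli_fps_def)

lemma bernoulli_recursion: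
  "(\<Sum>i\<le>n. bernoulli i / fact i * (1 / fact (n - i + 1))) = (if n = 0 then 1 else 0)"
proof -
  have "(bernoulli_fps * exp_quotient) $ n = (if n = 0 then 1 else 0)"
    by (simp add: bernoulli_fps_mult_exp_quotient)
  then show ?thesis
    by (simp add: fps_mult_nth bernoulli_div_fact atMost_atLeast0 exp_quotient_def)
qed

lemma bernoulli_0: "bernoulli 0 = 1"
  using bernoulli_recursion[of 0] by simp

lemma bernoulli_1: "bernoulli 1 = -1/2"
  using bernoulli_recursion[of 1] by (simp add: bernoulli_0)

definition fps_reflect :: "rat fps \<Rightarrow> rat fps" where
  "fps_reflect f = f oo (fps_const (-1) * fps_X)"

lemma fps_reflect_nth: "fps_reflect f $ k = (-1) ^ k * f $ k"
  by (simp add: fps_reflect_def fps_compose_linear)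

lemma fps_reflect_mult: "fps_reflect (f * g) = fps_reflect f * fps_reflect g"
  unfolding fps_reflect_def by (rule fps_compose_mult_distrib) simp

lemma fps_reflect_exp_quotient: "fps_reflect exp_quotient = fps_exp (-1) * exp_quotient"
proof -
  define E' where "E' = fps_exp (-1::rat)"
  have "fps_reflect fps_X = - fps_X" by (simp add: fps_eq_iff fps_reflect_nth fps_X_nth)
  moreover have "fps_reflect (fps_exp 1 - 1) = E' - 1"
    by (simp add: fps_reflect_def E'_def fps_compose_sub_distrib)
  ultimately have "- (fps_X * fps_reflect exp_quotient) = E' - 1"
    using X_mult_exp_quotient by (metis fps_reflect_mult minus_mult_left)
  then have "fps_X * fps_reflect exp_quotient = 1 - E'" by (simp add: minus_equation_iff)
  also have "1 - E' = E' * (fps_exp 1 - 1)"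
    using fps_exp_add_mult[of "-1::rat" 1] by (simp add: E'_def algebra_simps)
  also have "\<dots> = fps_X * (E' * exp_quotient)"
    by (simp add: X_mult_exp_quotient mult.left_commute)
  finally show ?thesis by (simp add: E'_def)
qed

text \<open>\<open>t/(exp t - 1) + t/2\<close> is even: reflecting \<open>t/(exp t - 1)\<close> adds \<open>t\<close>.\<close>
lemma fps_reflect_bernoulli_fps: "fps_reflect bernoulli_fps = bernoulli_fps + fps_X"
proof -
  define Q' where "Q' = fps_reflect exp_quotient"
  have inv: "fps_exp (-1) * fps_exp 1 = (1::rat fps)"
    using fps_exp_add_mult[of "-1::rat" 1] by simp
  have "fps_X * Q' = fps_exp (-1) * (fps_X * exp_quotient)"
    by (simp add: Q'_def fps_reflect_exp_quotient mult.left_commute)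
  also have "\<dots> = 1 - fps_exp (-1)"
    by (simp only: X_mult_exp_quotient right_diff_distrib inv mult_1_right)
  finally have XQ': "fps_X * Q' = 1 - fps_exp (-1)" .
  have "(bernoulli_fps + fps_X) * Q' = fps_exp (-1) * (bernoulli_fps * exp_quotient) + fps_X * Q'"
    by (simp add: Q'_def fps_reflect_exp_quotient algebra_simps)
  then have a: "(bernoulli_fps + fps_X) * Q' = 1"
    by (simp add: bernoulli_fps_mult_exp_quotient XQ')
  have "fps_reflect bernoulli_fps * Q' = fps_reflect (bernoulli_fps * exp_quotient)"
    by (simp add: fps_reflect_mult Q'_def)
  then have b: "fps_reflect bernoulli_fps * Q' = 1"
    by (simp add: bernoulli_fps_mult_exp_quotient fps_reflect_def)
  from a b show ?thesis
    by (metis mult_right_cancel mult_not_zero zero_neq_one)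
qed

lemma bernoulli_odd:
  assumes "odd n" "n \<ge> 3"
  shows "bernoulli n = 0"
proof -
  have "fps_reflect bernoulli_fps $ n = (bernoulli_fps + fps_X) $ n"
    by (simp add: fps_reflect_bernoulli_fps)
  then have "bernoulli_fps $ n = 0" using assms by (simp add: fps_reflect_nth fps_X_nth)
  then show ?thesis using bernoulli_div_fact[of n] by simp
qed

section \<open>Degree derivations and the adjoint action\<close>

definition cnt :: "bool \<Rightarrow> bool list \<Rightarrow> nat" where
  "cnt c u = length (filter (\<lambda>x. x = c) u)"

lemma cnt_take_drop: "cnt c (take i u) + cnt c (drop i u) = cnt c u"
  unfolding cnt_def by (metis append_take_drop_id filter_append length_append)

lift_definition der :: "bool \<Rightarrow> nc \<Rightarrow> nc" is "\<lambda>c f u. of_nat (cnt c u) * f u" .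

lemma coef_der: "coef (der c x) u = of_nat (cnt c u) * coef x u"
  by transfer simp

lemma der_mult: "der c (x * y) = der c x * y + x * der c y"
proof (subst nc_eq_iff, intro allI)
  fix u :: "bool list"
  have "coef (der c (x * y)) u = (\<Sum>i\<le>length u.
          (of_nat (cnt c (take i u)) + of_nat (cnt c (drop i u))) * (coef x (take i u) * coef y (drop i u)))"
    by (simp add: coef_der coef_mult ncmul_def sum_distrib_left cnt_take_drop flip: of_nat_add)
  also have "\<dots> = coef (der c x * y + x * der c y) u"
    by (simp add: coef_der coef_mult ncmul_def algebra_simps sum.distrib)
  finally show "coef (der c (x * y)) u = coef (der c x * y + x * der c y) u" .
qed

lemma der_uminus: "der c (- x) = - der c x" by (simp add: nc_eq_iff coef_der)
lemma der_scal_mult: "der c (scal a * x) = scal a * der c x" by (simp add: nc_eq_iff coef_der)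
lemma der_one: "der c 1 = 0" by (simp add: nc_eq_iff coef_der coef_1 ncone_def cnt_def)
lemma der_series: "der c (series a) = series (\<lambda>n. der c (a n))"
  by (simp add: nc_eq_iff coef_der coef_series sum_distrib_left)
lemma order_ge_der: "order_ge x k \<Longrightarrow> order_ge (der c x) k" by (simp add: order_ge_def coef_der)

definition ad :: "nc \<Rightarrow> nc \<Rightarrow> nc" where "ad h x = h * x - x * h"

lemma order_ge_ad: "order_ge h 1 \<Longrightarrow> order_ge x k \<Longrightarrow> order_ge (ad h x) (Suc k)"
  unfolding ad_def using order_ge_mult[of h 1 x k] order_ge_mult[of x k h 1]
  by (auto intro!: order_ge_diff)

lemma order_ge_ad_any: "order_ge x k \<Longrightarrow> order_ge (ad h x) k"
  unfolding ad_def using order_ge_mult[of h 0 x k] order_ge_mult[of x k h 0]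
  by (auto intro!: order_ge_diff)

lemma order_ge_adp: "order_ge h 1 \<Longrightarrow> order_ge x k \<Longrightarrow> order_ge ((ad h ^^ j) x) (k + j)"
  by (induction j) (auto intro: order_ge_ad)

lemma ad_uminus: "ad h (- x) = - ad h x" by (simp add: ad_def algebra_simps)
lemma ad_scal_mult: "ad h (scal c * x) = scal c * ad h x"
  by (simp add: ad_def right_diff_distrib mult.assoc scal_mult_left_commute)
lemma ad_zero: "ad h 0 = 0" by (simp add: ad_def)
lemma ad_zero_left: "ad 0 x = 0" by (simp add: ad_def)
lemma ad_self: "ad h h = 0" by (simp add: ad_def)
lemma ad_antisym: "ad x y = - ad y x" by (simp add: ad_def)
lemma ad_neg: "ad (- h) x = - ad h x" by (simp add: ad_def)
lemma ad_sum: "ad h (sum f A) = (\<Sum>x\<in>A. ad h (f x))"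
  by (simp add: ad_def sum_distrib_left sum_distrib_right sum_subtractf)

lemma adp_uminus: "(ad h ^^ j) (- x) = - (ad h ^^ j) x"
  by (induction j) (simp_all add: ad_uminus)
lemma adp_scal_mult: "(ad h ^^ j) (scal c * x) = scal c * (ad h ^^ j) x"
  by (induction j) (simp_all add: ad_scal_mult)
lemma adp_zero: "(ad h ^^ j) 0 = 0"
  by (induction j) (simp_all add: ad_zero)
lemma adp_neg: "(ad (- h) ^^ j) x = scal ((-1) ^ j) * (ad h ^^ j) x"
  by (induction j) (simp_all add: ad_neg ad_scal_mult scal_mult scal_uminus mult.assoc)

lemma adp_series:
  assumes "admissible a"
  shows "(ad h ^^ j) (series a) = series (\<lambda>n. (ad h ^^ j) (a n))"
  using assms
proof (induction j arbitrary: a)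
  case 0
  then show ?case by simp
next
  case (Suc j)
  have adm: "admissible (\<lambda>n. ad h (a n))"
    using Suc.prems by (simp add: admissible_def order_ge_ad_any)
  have "ad h (series a) = series (\<lambda>n. ad h (a n))"
    unfolding ad_def using Suc.prems by (simp add: series_mult_left series_mult_right series_diff)
  then show ?case
    using Suc.IH[OF adm] by (simp only: funpow_Suc_right comp_def)
qed

text \<open>Leibniz rule for powers, reordered so that all factors \<open>h\<close> stand on the right:
  \<open>D(h^n) = \<Sum>j<n. C(n,j+1) (ad h)^j(D h) h^(n-1-j)\<close>.\<close>
lemma der_power:
  "der c (h ^ n) = (\<Sum>j<n. of_nat (n choose Suc j) * ((ad h ^^ j) (der c h) * h ^ (n - Suc j)))"
proof (induction n)
  case 0
  then show ?case by (simp add: der_one)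
next
  case (Suc n)
  define P where "P j = (ad h ^^ j) (der c h)" for j
  define T where "T j = of_nat (n choose j) * (P j * h ^ (n - j))" for j
  define S where "S j = of_nat (n choose Suc j) * (P j * h ^ (n - j))" for j
  have h_P: "h * P j = P (Suc j) + P j * h" for j by (simp add: P_def ad_def)
  have "h * der c (h ^ n) = (\<Sum>j<n. of_nat (n choose Suc j) * (h * P j * h ^ (n - Suc j)))"
    unfolding Suc.IH sum_distrib_left P_def
    by (intro sum.cong refl) (metis mult.assoc mult_of_nat_commute)
  also have "\<dots> = (\<Sum>j<n. T (Suc j)) + (\<Sum>j<n. S j)"
  proof -
    have "h * h ^ (n - Suc j) = h ^ (n - j)" if "j < n" for j
      using that by (simp flip: power_Suc add: Suc_diff_Suc)
    then show ?thesis
      by (simp add: h_P T_def S_def algebra_simps sum.distrib)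
  qed
  also have "(\<Sum>j<n. T (Suc j)) = (\<Sum>j<Suc n. T j) - P 0 * h ^ n"
    by (subst sum.lessThan_Suc_shift) (simp add: T_def)
  also have "(\<Sum>j<n. S j) = (\<Sum>j<Suc n. S j)"
    by (simp add: S_def binomial_eq_0)
  finally have "der c (h ^ Suc n) = (\<Sum>j<Suc n. T j + S j)"
    by (simp add: der_mult P_def sum.distrib)
  also have "\<dots> = (\<Sum>j<Suc n. of_nat (Suc n choose Suc j) * (P j * h ^ (Suc n - Suc j)))"
    by (simp add: T_def S_def algebra_simps)
  finally show ?case by (simp add: P_def)
qed

section \<open>The operators \<open>K_h = (exp(ad h) - 1)/ad h\<close> and \<open>B_h = ad h/(exp(ad h) - 1)\<close>\<close>

definition dexp_op :: "nc \<Rightarrow> nc \<Rightarrow> nc" where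
  "dexp_op h A = series (\<lambda>j. scal (1 / fact (Suc j)) * (ad h ^^ j) A)"

definition bern_op :: "nc \<Rightarrow> nc \<Rightarrow> nc" where
  "bern_op h Z = series (\<lambda>i. scal (bernoulli i / fact i) * (ad h ^^ i) Z)"

lemma admissible_adp: "order_ge h 1 \<Longrightarrow> admissible (\<lambda>j. scal (f j) * (ad h ^^ j) A)"
  unfolding admissible_def using order_ge_adp[of h A 0] by (simp add: order_ge_scal_mult)

lemma dexp_op_uminus: "dexp_op h (- A) = - dexp_op h A"
  by (simp add: dexp_op_def adp_uminus series_uminus)

lemma dexp_op_zero: "dexp_op h 0 = 0"
  by (simp add: dexp_op_def adp_zero series_zero)

lemma dexp_op_self:
  assumes h: "order_ge h 1" shows "dexp_op h h = h"
proof -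
  have "(ad h ^^ Suc j) h = 0" for j
    by (induction j) (simp_all add: ad_self ad_zero)
  then have "dexp_op h h = (\<Sum>n\<le>0. scal (1 / fact (Suc n)) * (ad h ^^ n) h)"
    unfolding dexp_op_def
    by (intro series_finite admissible_adp[OF h]) (metis gr0_conv_Suc mult_zero_right)
  then show ?thesis by simp
qed

lemma fact_binomial_quotient:
  assumes "j \<le> m"
  shows "1 / fact (Suc m) * of_nat (Suc m choose Suc j) = (1 / fact (Suc j) * (1 / fact (m - j)) :: rat)"
proof -
  have "of_nat (Suc m choose Suc j) = (fact (Suc m) / (fact (Suc j) * fact (m - j)) :: rat)"
    using binomial_fact[of "Suc j" "Suc m"] assms by simp
  then show ?thesis by (simp del: fact_Suc)
qed

text \<open>The degree-\<open>(m+1)\<close> part of \<open>D(exp h)\<close> as the Cauchy product of the two series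
  \<open>\<Sum>j. (ad h)^j(D h)/(j+1)!\<close> and \<open>\<Sum>k. h^k/k!\<close>.\<close>
lemma der_power_fact:
  "scal (1 / fact (Suc m)) * der c (h ^ Suc m) =
     (\<Sum>j\<le>m. (scal (1 / fact (Suc j)) * (ad h ^^ j) (der c h)) * (scal (1 / fact (m - j)) * h ^ (m - j)))"
proof -
  have "scal (1 / fact (Suc m)) * der c (h ^ Suc m) =
      (\<Sum>j\<le>m. scal (1 / fact (Suc m) * of_nat (Suc m choose Suc j)) * ((ad h ^^ j) (der c h) * h ^ (m - j)))"
    unfolding der_power sum_distrib_left lessThan_Suc_atMost
    by (intro sum.cong refl) (simp only: scal_of_nat[symmetric] scal_mult mult.assoc diff_Suc_Suc)
  also have "\<dots> = (\<Sum>j\<le>m. scal (1 / fact (Suc j) * (1 / fact (m - j))) * ((ad h ^^ j) (der c h) * h ^ (m - j)))"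
    by (intro sum.cong refl) (simp only: fact_binomial_quotient atMost_iff)
  finally show ?thesis by (simp only: scal_mult_mult)
qed

lemma der_nexp:
  assumes h: "order_ge h 1"
  shows "der c (nexp h) = dexp_op h (der c h) * nexp h"
proof -
  define P where "P j = scal (1 / fact (Suc j)) * (ad h ^^ j) (der c h)" for j
  have P_order: "order_ge (P j) j" for j
    using order_ge_adp[OF h, of "der c h" 0 j] by (simp add: P_def order_ge_scal_mult)
  have adm: "admissible (\<lambda>n. scal (1 / fact n) * der c (h ^ n))"
    unfolding admissible_def by (intro allI order_ge_scal_mult order_ge_der order_ge_power h)
  have "der c (nexp h) = series (\<lambda>n. scal (1 / fact n) * der c (h ^ n))"
    by (simp add: nexp_series der_series der_scal_mult)
  also have "\<dots> = series (\<lambda>m. scal (1 / fact (Suc m)) * der c (h ^ Suc m))"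
    by (subst series_shift[OF adm]) (simp add: der_one)
  also have "\<dots> = series (\<lambda>m. \<Sum>j\<le>m. P j * (scal (1 / fact (m - j)) * h ^ (m - j)))"
    by (simp only: der_power_fact P_def)
  also have "\<dots> = series (\<lambda>j. series (\<lambda>k. P j * (scal (1 / fact k) * h ^ k)))"
    by (rule series_cauchy[symmetric])
      (intro order_ge_mult order_ge_scal_mult order_ge_power h P_order)
  also have "\<dots> = series (\<lambda>j. P j * nexp h)"
    unfolding nexp_series
    by (simp add: series_mult_left[OF admissible_eval[OF h, of "fps_exp 1"], simplified])
  also have "\<dots> = dexp_op h (der c h) * nexp h"
    unfolding dexp_op_def P_def by (rule series_mult_right[symmetric, OF admissible_adp[OF h]])
  finally show ?thesis .
qed

text \<open>\<open>B_h\<close> is a left inverse of \<open>K_h\<close>: the composite has the coefficients of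
  \<open>t/(exp t - 1) * (exp t - 1)/t = 1\<close>.\<close>
lemma bern_op_dexp_op:
  assumes h: "order_ge h 1"
  shows "bern_op h (dexp_op h A) = A"
proof -
  define P where "P n = (ad h ^^ n) A" for n
  have P_order: "order_ge (P n) n" for n
    using order_ge_adp[OF h, of A 0 n] by (simp add: P_def)
  have adm: "admissible (\<lambda>k. scal (1 / fact (Suc k)) * P (i + k))" for i
    unfolding admissible_def using P_order order_ge_mono by (metis le_add2 order_ge_scal_mult)
  have adp_dexp: "(ad h ^^ i) (dexp_op h A) = series (\<lambda>k. scal (1 / fact (Suc k)) * P (i + k))" for i
    unfolding dexp_op_def adp_series[OF admissible_adp[OF h]]
    by (simp add: adp_scal_mult P_def funpow_add)
  have "bern_op h (dexp_op h A) =
      series (\<lambda>i. series (\<lambda>k. scal (bernoulli i / fact i) * (scal (1 / fact (Suc k)) * P (i + k))))"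
    unfolding bern_op_def adp_dexp by (simp only: series_mult_left[OF adm])
  also have "\<dots> = series (\<lambda>n. \<Sum>i\<le>n. scal (bernoulli i / fact i) *
                                   (scal (1 / fact (Suc (n - i))) * P (i + (n - i))))"
    by (rule series_cauchy) (intro order_ge_scal_mult P_order)
  also have "\<dots> = series (\<lambda>n. scal (if n = 0 then 1 else 0) * P n)"
  proof -
    have "scal (bernoulli i / fact i) * (scal (1 / fact (Suc (n - i))) * P (i + (n - i)))
        = scal (bernoulli i / fact i * (1 / fact (n - i + 1))) * P n" if "i \<le> n" for i n
      using that by (simp only: scal_mult mult.assoc Suc_eq_plus1 le_add_diff_inverse)
    then have "(\<Sum>i\<le>n. scal (bernoulli i / fact i) * (scal (1 / fact (Suc (n - i))) * P (i + (n - i))))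
        = scal (\<Sum>i\<le>n. bernoulli i / fact i * (1 / fact (n - i + 1))) * P n" for n
      by (simp add: scal_sum sum_distrib_right)
    then show ?thesis by (simp only: bernoulli_recursion)
  qed
  also have "\<dots> = A"
    by (subst series_finite[where N=0]) (auto simp: admissible_def P_order order_ge_scal_mult P_def)
  finally show ?thesis .
qed

section \<open>The differential equations of the Hausdorff series\<close>

definition genX :: nc where "genX = Abs_nc ncX"
definition genY :: nc where "genY = Abs_nc ncY"
definition hs :: nc where "hs = Abs_nc hausdorff"

lemma coef_genX: "coef genX u = (if u = [False] then 1 else 0)" by (simp add: genX_def ncX_def)
lemma coef_genY: "coef genY u = (if u = [True] then 1 else 0)" by (simp add: genY_def ncY_def)

lemma order_ge_genX: "order_ge genX 1" by (simp add: order_ge_def coef_genX)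
lemma order_ge_genY: "order_ge genY 1" by (simp add: order_ge_def coef_genY)

lemma der_genX: "der False genX = genX" "der True genX = 0"
  by (simp_all add: nc_eq_iff coef_der coef_genX cnt_def)
lemma der_genY: "der False genY = 0" "der True genY = genY"
  by (simp_all add: nc_eq_iff coef_der coef_genY cnt_def)

lemma der_nexp_genX: "der False (nexp genX) = genX * nexp genX" "der True (nexp genX) = 0"
  by (simp_all add: der_nexp[OF order_ge_genX] der_genX dexp_op_self[OF order_ge_genX] dexp_op_zero)

lemma der_nexp_genY: "der False (nexp genY) = 0" "der True (nexp genY) = nexp genY * genY"
  by (simp_all add: der_nexp[OF order_ge_genY] der_genY dexp_op_self[OF order_ge_genY] dexp_op_zero
      nexp_commute[OF order_ge_genY])

lemma hs_eval: "hs = eval (fps_ln 1) (nexp genX * nexp genY - 1)"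
proof -
  have "coef (nexp genX) = ncexp ncX" "coef (nexp genY) = ncexp ncY"
    by (metis Abs_ncexp coef_Abs genX_def, metis Abs_ncexp coef_Abs genY_def)
  then have "Abs_nc (ncmul (ncexp ncX) (ncexp ncY) - ncone) = nexp genX * nexp genY - 1"
    by (simp add: nc_eq_iff coef_mult coef_1)
  then show ?thesis unfolding hs_def hausdorff_def Abs_nclog1p by simp
qed

lemma order_ge_exp_product: "order_ge (nexp genX * nexp genY - 1) 1"
proof -
  have "coef (nexp a) [] = 1" for a by (simp add: nexp_series coef_series coef_1 ncone_def)
  then show ?thesis by (simp add: order_ge_def coef_mult coef_1 ncone_def)
qed

lemma order_ge_hs: "order_ge hs 1"
  unfolding hs_eval by (rule order_ge_eval[OF order_ge_exp_product]) simp

lemma nexp_hs: "nexp hs = nexp genX * nexp genY"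
  unfolding hs_eval nexp_eval_ln[OF order_ge_exp_product] by simp

lemma cancel_nexp_hs: "x * nexp hs = y * nexp hs \<Longrightarrow> x = y"
  by (metis mult.assoc mult_1_right nexp_inverse(2)[OF order_ge_hs])

text \<open>\<open>D_X h = B_h X\<close>: from \<open>D_X(exp h) = X exp h\<close> and \<open>D_X(exp h) = K_h(D_X h) exp h\<close>.\<close>
theorem der_X_hs: "der False hs = bern_op hs genX"
proof -
  have "der False (nexp hs) = genX * nexp hs"
    unfolding nexp_hs by (simp add: der_mult der_nexp_genX der_nexp_genY mult.assoc)
  then have "dexp_op hs (der False hs) * nexp hs = genX * nexp hs"
    by (simp add: der_nexp[OF order_ge_hs])
  then have "dexp_op hs (der False hs) = genX" by (rule cancel_nexp_hs)
  then show ?thesis using bern_op_dexp_op[OF order_ge_hs, of "der False hs"] by simp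
qed

text \<open>\<open>D_Y h = B_(-h) Y\<close>: differentiating \<open>exp(-h) exp h = 1\<close> with
  \<open>D_Y(exp h) = exp h Y\<close> gives \<open>K_(-h)(D_Y h) = Y\<close>.\<close>
theorem der_Y_hs: "der True hs = bern_op (- hs) genY"
proof -
  have neg: "order_ge (- hs) 1" by (rule order_ge_uminus[OF order_ge_hs])
  define A where "A = der True hs"
  have der_nexp_hs: "der True (nexp hs) = nexp hs * genY"
    unfolding nexp_hs by (simp add: der_mult der_nexp_genX der_nexp_genY mult.assoc)
  have "0 = der True (nexp (- hs) * nexp hs)" by (simp add: nexp_inverse[OF order_ge_hs] der_one)
  also have "\<dots> = - dexp_op (- hs) A * (nexp (- hs) * nexp hs) + nexp (- hs) * (nexp hs * genY)"
    unfolding der_mult der_nexp[OF neg] der_nexp_hs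
    by (simp add: der_uminus dexp_op_uminus A_def mult.assoc)
  also have "\<dots> = - dexp_op (- hs) A + genY"
    by (simp add: nexp_inverse[OF order_ge_hs] mult.assoc[symmetric])
  finally have "dexp_op (- hs) A = genY" by (simp add: eq_neg_iff_add_eq_0 algebra_simps)
  then show ?thesis using bern_op_dexp_op[OF neg, of A] by (simp add: A_def)
qed

section \<open>Homogeneous components\<close>

lift_definition component :: "nat \<Rightarrow> nat \<Rightarrow> nc \<Rightarrow> nc" is
  "\<lambda>a b f u. if cnt False u = a \<and> cnt True u = b then f u else 0" .

lemma coef_component:
  "coef (component a b x) u = (if cnt False u = a \<and> cnt True u = b then coef x u else 0)"
  by transfer simp

lemma cnt_False_True: "cnt False u + cnt True u = length u"
  unfolding cnt_def by (induction u) auto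

lemma component_diff: "component a b (x - y) = component a b x - component a b y"
  by (simp add: nc_eq_iff coef_component)
lemma component_uminus: "component a b (- x) = - component a b x"
  by (simp add: nc_eq_iff coef_component)
lemma component_scal_mult: "component a b (scal c * x) = scal c * component a b x"
  by (simp add: nc_eq_iff coef_component)
lemma component_series: "component a b (series f) = series (\<lambda>n. component a b (f n))"
  by (auto simp: nc_eq_iff coef_component coef_series)
lemma order_ge_component: "order_ge x k \<Longrightarrow> order_ge (component a b x) k"
  by (simp add: order_ge_def coef_component)

lemma component_vanish: "order_ge x (Suc (a + b)) \<Longrightarrow> component a b x = 0"
  by (auto simp: nc_eq_iff coef_component order_ge_def simp flip: cnt_False_True)

lemma component_der_False: "component a b (der False x) = scal (of_nat a) * component a b x"
  by (simp add: nc_eq_iff coef_component coef_der)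
lemma component_der_True: "component a b (der True x) = scal (of_nat b) * component a b x"
  by (simp add: nc_eq_iff coef_component coef_der)

lemma component_genX: "component a b genX = (if a = 1 \<and> b = 0 then genX else 0)"
  by (auto simp: nc_eq_iff coef_component coef_genX cnt_def)
lemma component_genY: "component a b genY = (if a = 0 \<and> b = 1 then genY else 0)"
  by (auto simp: nc_eq_iff coef_component coef_genY cnt_def)

lemma component_0_0_hs: "component 0 0 hs = 0"
  using component_vanish[of hs 0 0] order_ge_hs by simp

text \<open>Counting identity behind the multiplicativity of the bigrading.\<close>
lemma sum_bidegree_split:
  "(\<Sum>(p,q)\<in>{..a}\<times>{..b}. (if cnt False t = p \<and> cnt True t = q then x else 0) *
        (if cnt False d = a - p \<and> cnt True d = b - q then y else 0))
   = (if cnt False t + cnt False d = a \<and> cnt True t + cnt True d = b then x * y else (0::rat))"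
proof -
  define p0 q0 p1 q1 where "p0 = cnt False t" "q0 = cnt True t" "p1 = cnt False d" "q1 = cnt True d"
  have "(\<Sum>(p,q)\<in>{..a}\<times>{..b}. (if p0 = p \<and> q0 = q then x else 0) *
          (if p1 = a - p \<and> q1 = b - q then y else 0))
      = (\<Sum>pq\<in>{..a}\<times>{..b}. if (p0, q0) = pq then (if p1 = a - fst pq \<and> q1 = b - snd pq then x * y else 0) else 0)"
    by (intro sum.cong refl) (auto split: if_splits)
  also have "\<dots> = (if (p0, q0) \<in> {..a}\<times>{..b} then (if p1 = a - p0 \<and> q1 = b - q0 then x * y else 0) else 0)"
    by (subst sum.delta') auto
  also have "\<dots> = (if p0 + p1 = a \<and> q0 + q1 = b then x * y else 0)" by auto
  finally show ?thesis by (simp add: p0_q0_p1_q1_def)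
qed

lemma component_mult:
  "component a b (x * y) = (\<Sum>p\<le>a. \<Sum>q\<le>b. component p q x * component (a - p) (b - q) y)"
proof (subst nc_eq_iff, intro allI)
  fix u :: "bool list"
  have "coef (\<Sum>p\<le>a. \<Sum>q\<le>b. component p q x * component (a - p) (b - q) y) u
      = (\<Sum>(p,q)\<in>{..a}\<times>{..b}. \<Sum>i\<le>length u.
          coef (component p q x) (take i u) * coef (component (a - p) (b - q) y) (drop i u))"
    by (simp add: sum.cartesian_product coef_mult ncmul_def case_prod_unfold)
  also have "\<dots> = (\<Sum>i\<le>length u. \<Sum>(p,q)\<in>{..a}\<times>{..b}.
          coef (component p q x) (take i u) * coef (component (a - p) (b - q) y) (drop i u))"
    by (subst sum.swap) (simp add: case_prod_unfold)
  also have "\<dots> = (\<Sum>i\<le>length u. if cnt False u = a \<and> cnt True u = b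
                     then coef x (take i u) * coef y (drop i u) else 0)"
    by (intro sum.cong refl) (simp only: coef_component sum_bidegree_split cnt_take_drop)
  also have "\<dots> = coef (component a b (x * y)) u"
    by (auto simp: coef_component coef_mult ncmul_def)
  finally show "coef (component a b (x * y)) u =
      coef (\<Sum>p\<le>a. \<Sum>q\<le>b. component p q x * component (a - p) (b - q) y) u" by simp
qed

lemma sum_atMost_reflect: "(\<Sum>p\<le>a. f (a - p)) = (\<Sum>p\<le>(a::nat). f p)"
  using sum.nat_diff_reindex[of f "Suc a"] by (simp add: lessThan_Suc_atMost)

lemma component_ad:
  "component a b (ad h W) = (\<Sum>p\<le>a. \<Sum>q\<le>b. ad (component p q h) (component (a - p) (b - q) W))"
proof -
  have "(\<Sum>p\<le>a. \<Sum>q\<le>b. component p q W * component (a - p) (b - q) h)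
      = (\<Sum>p\<le>a. \<Sum>q\<le>b. component (a - p) (b - q) W * component (a - (a - p)) (b - (b - q)) h)"
  proof -
    have "(\<Sum>p\<le>a. \<Sum>q\<le>b. component p q W * component (a - p) (b - q) h)
        = (\<Sum>p\<le>a. \<Sum>q\<le>b. component (a - p) q W * component (a - (a - p)) (b - q) h)"
      by (rule sum_atMost_reflect[symmetric, where f = "\<lambda>p. \<Sum>q\<le>b. component p q W * component (a - p) (b - q) h"])
    also have "\<dots> = (\<Sum>p\<le>a. \<Sum>q\<le>b. component (a - p) (b - q) W * component (a - (a - p)) (b - (b - q)) h)"
    proof (rule sum.cong[OF refl])
      fix p
      show "(\<Sum>q\<le>b. component (a - p) q W * component (a - (a - p)) (b - q) h) =
          (\<Sum>q\<le>b. component (a - p) (b - q) W * component (a - (a - p)) (b - (b - q)) h)"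
        by (rule sum_atMost_reflect[symmetric,
              where f = "\<lambda>q. component (a - p) q W * component (a - (a - p)) (b - q) h"])
    qed
    finally show ?thesis .
  qed
  also have "\<dots> = (\<Sum>p\<le>a. \<Sum>q\<le>b. component (a - p) (b - q) W * component p q h)"
    by (intro sum.cong refl) simp
  finally show ?thesis
    unfolding ad_def component_diff component_mult by (simp add: sum_subtractf)
qed

definition lists_le :: "nat \<Rightarrow> nat \<Rightarrow> nat \<Rightarrow> (nat \<times> nat) list set" where
  "lists_le j a b = {ps. length ps = j \<and> sum_list (map fst ps) \<le> a \<and> sum_list (map snd ps) \<le> b}"

definition lists_eq :: "nat \<Rightarrow> nat \<Rightarrow> nat \<Rightarrow> (nat \<times> nat) list set" where
  "lists_eq j a b = {ps. length ps = j \<and> sum_list (map fst ps) = a \<and> sum_list (map snd ps) = b}"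

definition nested_ad :: "(nat \<times> nat) list \<Rightarrow> nc \<Rightarrow> nc" where
  "nested_ad ps Z = foldr (\<lambda>p acc. ad (component (fst p) (snd p) hs) acc) ps Z"

lemma nested_ad_Nil [simp]: "nested_ad [] Z = Z"
  by (simp add: nested_ad_def)
lemma nested_ad_Cons [simp]: "nested_ad (p # ps) Z = ad (component (fst p) (snd p) hs) (nested_ad ps Z)"
  by (simp add: nested_ad_def)

lemma nested_ad_zero: "nested_ad ps 0 = 0"
  by (induction ps) (simp_all add: ad_zero)

lemma nested_ad_0_0: "(0, 0) \<in> set ps \<Longrightarrow> nested_ad ps Z = 0"
  by (induction ps) (auto simp: component_0_0_hs ad_zero_left ad_zero)

lemma finite_lists_le: "finite (lists_le j a b)"
proof (rule finite_subset)
  show "lists_le j a b \<subseteq> {ps. set ps \<subseteq> {..a} \<times> {..b} \<and> length ps = j}"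
  proof
    fix ps assume ps: "ps \<in> lists_le j a b"
    have "fst x \<le> sum_list (map fst ps)" "snd x \<le> sum_list (map snd ps)" if "x \<in> set ps" for x
      using that by (auto intro!: member_le_sum_list)
    with ps show "ps \<in> {ps. set ps \<subseteq> {..a} \<times> {..b} \<and> length ps = j}"
      by (fastforce simp: lists_le_def)
  qed
  show "finite {ps. set ps \<subseteq> {..a} \<times> {..b} \<and> length ps = j}"
    by (rule finite_lists_length_eq) simp
qed

lemma finite_lists_eq: "finite (lists_eq j a b)"
  by (rule finite_subset[OF _ finite_lists_le[of j a b]]) (auto simp: lists_eq_def lists_le_def)

lemma sum_lists_le_Suc:
  "(\<Sum>ps\<in>lists_le (Suc j) a b. g ps) = (\<Sum>p\<le>a. \<Sum>q\<le>b. \<Sum>ps\<in>lists_le j (a - p) (b - q). g ((p, q) # ps))"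
proof -
  define B where "B = (\<lambda>pq. lists_le j (a - fst pq) (b - snd pq))"
  have "(\<Sum>p\<le>a. \<Sum>q\<le>b. \<Sum>ps\<in>lists_le j (a - p) (b - q). g ((p, q) # ps))
      = (\<Sum>pq\<in>{..a}\<times>{..b}. \<Sum>ps\<in>B pq. g (pq # ps))"
    by (simp add: sum.cartesian_product B_def case_prod_unfold)
  also have "\<dots> = (\<Sum>x\<in>Sigma ({..a}\<times>{..b}) B. g (fst x # snd x))"
    using sum.Sigma[of "{..a}\<times>{..b}" B "\<lambda>pq ps. g (pq # ps)"]
    by (simp add: B_def finite_lists_le case_prod_unfold)
  also have "\<dots> = (\<Sum>ps\<in>lists_le (Suc j) a b. g ps)"
  proof (rule sum.reindex_bij_witness[where i = "\<lambda>ps. (hd ps, tl ps)" and j = "\<lambda>x. fst x # snd x"])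
    fix x assume "x \<in> Sigma ({..a}\<times>{..b}) B"
    then show "(hd (fst x # snd x), tl (fst x # snd x)) = x" "fst x # snd x \<in> lists_le (Suc j) a b"
      by (auto simp: lists_le_def B_def)
  next
    fix ps assume "ps \<in> lists_le (Suc j) a b"
    then obtain p ps' where "ps = p # ps'" "length ps' = j"
      "fst p + sum_list (map fst ps') \<le> a" "snd p + sum_list (map snd ps') \<le> b"
      by (cases ps) (auto simp: lists_le_def)
    then show "fst (hd ps, tl ps) # snd (hd ps, tl ps) = ps" "(hd ps, tl ps) \<in> Sigma ({..a}\<times>{..b}) B"
      by (auto simp: lists_le_def B_def mem_Times_iff)
  qed simp
  finally show ?thesis ..
qed

lemma component_adp:
  "component a b ((ad hs ^^ j) Z) =
     (\<Sum>ps\<in>lists_le j a b. nested_ad ps (component (a - sum_list (map fst ps)) (b - sum_list (map snd ps)) Z))"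
proof (induction j arbitrary: a b)
  case 0
  have "lists_le 0 a b = {[]}" by (auto simp: lists_le_def)
  then show ?case by simp
next
  case (Suc j)
  show ?case
    by (simp add: sum_lists_le_Suc component_ad Suc.IH ad_sum diff_diff_left)
qed

lemma component_adp_homogeneous:
  assumes hom: "\<And>p q. component p q Z = (if p = a0 \<and> q = b0 then Z else 0)"
  shows "component (a0 + a) (b0 + b) ((ad hs ^^ j) Z) = (\<Sum>ps\<in>lists_eq j a b. nested_ad ps Z)"
proof -
  have "component (a0 + a) (b0 + b) ((ad hs ^^ j) Z) =
      (\<Sum>ps\<in>lists_le j (a0 + a) (b0 + b).
         if sum_list (map fst ps) = a \<and> sum_list (map snd ps) = b then nested_ad ps Z else 0)"
    unfolding component_adp hom
    by (intro sum.cong refl) (auto simp: nested_ad_zero lists_le_def)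
  also have "\<dots> = (\<Sum>ps\<in>{ps\<in>lists_le j (a0 + a) (b0 + b).
                        sum_list (map fst ps) = a \<and> sum_list (map snd ps) = b}. nested_ad ps Z)"
    by (simp add: sum.inter_filter finite_lists_le)
  also have "{ps\<in>lists_le j (a0 + a) (b0 + b). sum_list (map fst ps) = a \<and> sum_list (map snd ps) = b}
      = lists_eq j a b"
    by (auto simp: lists_le_def lists_eq_def)
  finally show ?thesis .
qed

lemma lists_eq_Suc_0: "lists_eq (Suc 0) a b = {[(a, b)]}"
  by (auto simp: lists_eq_def length_Suc_conv)

lemma sum_lists_eq_tuples: "(\<Sum>ps\<in>lists_eq (2 * r) a b. nested_ad ps Z) = (\<Sum>ps\<in>tuples r a b. nested_ad ps Z)"
proof (rule sum.mono_neutral_right)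
  show "\<forall>ps\<in>lists_eq (2 * r) a b - tuples r a b. nested_ad ps Z = 0"
  proof
    fix ps assume "ps \<in> lists_eq (2 * r) a b - tuples r a b"
    then obtain p where "p \<in> set ps" "fst p + snd p < 1" by (auto simp: tuples_def lists_eq_def not_le)
    then have "(0, 0) \<in> set ps" by (metis add_is_0 less_one prod.collapse)
    then show "nested_ad ps Z = 0" by (rule nested_ad_0_0)
  qed
  show "tuples r a b \<subseteq> lists_eq (2 * r) a b" by (auto simp: tuples_def lists_eq_def)
qed (rule finite_lists_eq)

lemma sum_even_odd: "(\<Sum>i\<le>2 * M + 1. f i) = (\<Sum>r\<le>M. f (2 * r)) + (\<Sum>r\<le>M. f (2 * r + 1))"
  for f :: "nat \<Rightarrow> 'a::comm_monoid_add"
proof (induction M)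
  case 0
  then show ?case by simp
next
  case (Suc M)
  have index: "2 * Suc M + 1 = Suc (Suc (2 * M + 1))" by simp
  show ?case unfolding index sum.atMost_Suc Suc.IH by (simp add: algebra_simps)
qed

lemma series_even_part:
  assumes vanish: "\<And>i. i > 2 * M + 1 \<Longrightarrow> f i = 0" and adm: "admissible f"
    and odd_zero: "\<And>r. r \<in> {1..M} \<Longrightarrow> f (2 * r + 1) = 0"
  shows "series f = f 0 + f 1 + (\<Sum>r\<in>{1..M}. f (2 * r))"
proof -
  have "series f = (\<Sum>i\<le>2 * M + 1. f i)" by (rule series_finite[OF vanish adm])
  also have "\<dots> = (\<Sum>r\<le>M. f (2 * r)) + (\<Sum>r\<le>M. f (2 * r + 1))" by (rule sum_even_odd)
  also have "(\<Sum>r\<le>M. f (2 * r)) = f 0 + (\<Sum>r\<in>{1..M}. f (2 * r))"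
    by (simp add: atMost_atLeast0 sum.atLeast_Suc_atMost)
  also have "(\<Sum>r\<le>M. f (2 * r + 1)) = f 1"
    using odd_zero by (simp add: atMost_atLeast0 sum.atLeast_Suc_atMost del: mult_0_right)
  finally show ?thesis by (simp add: algebra_simps)
qed

text \<open>The bidegree-\<open>(a,b)\<close> component of \<open>B_h Z\<close>: only \<open>(ad h)^i Z\<close> with \<open>i < a + b\<close>
  contribute, and among them \<open>B_0 = 1\<close>, \<open>B_1 = -1/2\<close> and the even Bernoulli numbers.\<close>
lemma component_bern_op:
  assumes h: "order_ge h 1" and Z: "order_ge Z 1" and deg: "a + b \<le> Suc M"
  shows "component a b (bern_op h Z) =
    component a b Z + scal (-1/2) * component a b (ad h Z) +
    (\<Sum>r\<in>{1..M}. scal (bernoulli (2*r) / fact (2*r)) * component a b ((ad h ^^ (2*r)) Z))"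
proof -
  define f where "f i = scal (bernoulli i / fact i) * component a b ((ad h ^^ i) Z)" for i
  have order: "order_ge ((ad h ^^ i) Z) (1 + i)" for i by (rule order_ge_adp[OF h Z])
  have "component a b (bern_op h Z) = series f"
    unfolding f_def bern_op_def by (simp add: component_series component_scal_mult)
  also have "\<dots> = f 0 + f 1 + (\<Sum>r\<in>{1..M}. f (2 * r))"
  proof (rule series_even_part)
    fix i assume "2 * M + 1 < i"
    then have "Suc (a + b) \<le> 1 + i" using deg by simp
    then show "f i = 0" unfolding f_def by (simp add: component_vanish[OF order_ge_mono[OF order]])
  next
    show "admissible f" unfolding admissible_def f_def
      by (intro allI order_ge_scal_mult order_ge_component order_ge_mono[OF order]) simp
  next
    fix r assume "r \<in> {1..M}"
    then show "f (2 * r + 1) = 0" by (simp add: f_def bernoulli_odd)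
  qed
  also have "f 0 = component a b Z" by (simp add: f_def bernoulli_0)
  also have "f 1 = scal (-1/2) * component a b (ad h Z)" using bernoulli_1 by (simp add: f_def)
  finally show ?thesis by (simp add: f_def)
qed

text \<open>The \<open>X\<close>-recursion in the ring \<open>nc\<close>: the bidegree-\<open>(w+1,b)\<close> part of \<open>D_X h = B_h X\<close>.\<close>
lemma recursion_X_nc:
  assumes wb: "w + b \<ge> 1"
  shows "scal (of_nat (w + 1)) * component (w + 1) b hs =
    scal (1/2) * ad genX (component w b hs) +
    (\<Sum>r\<in>{1..w+b}. scal (bernoulli (2*r) / fact (2*r)) * (\<Sum>ps\<in>tuples r w b. nested_ad ps genX))"
proof -
  have brackets: "component (Suc w) b ((ad hs ^^ j) genX) = (\<Sum>ps\<in>lists_eq j w b. nested_ad ps genX)" for j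
    using component_adp_homogeneous[of genX 1 0 w b j] by (simp add: component_genX)
  have "scal (of_nat (w + 1)) * component (w + 1) b hs = component (Suc w) b (bern_op hs genX)"
    by (simp add: component_der_False flip: der_X_hs)
  also have "\<dots> = scal (-1/2) * component (Suc w) b ((ad hs ^^ 1) genX) +
      (\<Sum>r\<in>{1..w+b}. scal (bernoulli (2*r) / fact (2*r)) * component (Suc w) b ((ad hs ^^ (2*r)) genX))"
  proof -
    have "component (Suc w) b genX = 0" using wb by (auto simp: component_genX)
    then show ?thesis
      using component_bern_op[OF order_ge_hs order_ge_genX, of "Suc w" b "w + b"] by simp
  qed
  also have "\<dots> = scal (-1/2) * ad (component w b hs) genX +
      (\<Sum>r\<in>{1..w+b}. scal (bernoulli (2*r) / fact (2*r)) * (\<Sum>ps\<in>tuples r w b. nested_ad ps genX))"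
    by (simp only: brackets sum_lists_eq_tuples) (simp add: lists_eq_Suc_0)
  finally show ?thesis by (simp add: ad_antisym[of _ genX] scal_uminus)
qed

text \<open>The \<open>Y\<close>-recursion in the ring \<open>nc\<close>: the bidegree-\<open>(w+1,b)\<close> part of \<open>D_Y h = B_(-h) Y\<close>;
  replacing \<open>h\<close> by \<open>-h\<close> only changes the sign of the odd term.\<close>
lemma recursion_Y_nc:
  assumes b: "b \<ge> 1"
  shows "scal (of_nat b) * component (w + 1) b hs =
    scal (-1/2) * ad genY (component (w + 1) (b - 1) hs) +
    (\<Sum>r\<in>{1..w+b}. scal (bernoulli (2*r) / fact (2*r)) * (\<Sum>ps\<in>tuples r (w + 1) (b - 1). nested_ad ps genY))"
proof -
  have brackets: "component (Suc w) b ((ad hs ^^ j) genY) = (\<Sum>ps\<in>lists_eq j (Suc w) (b - 1). nested_ad ps genY)"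
    for j using component_adp_homogeneous[of genY 0 1 "Suc w" "b - 1" j] b by (simp add: component_genY)
  have sign: "(ad (- hs) ^^ j) genY = scal ((-1) ^ j) * (ad hs ^^ j) genY" for j
    by (rule adp_neg)
  have "scal (of_nat b) * component (w + 1) b hs = component (Suc w) b (bern_op (- hs) genY)"
    by (simp add: component_der_True flip: der_Y_hs)
  also have "\<dots> = scal (1/2) * component (Suc w) b ((ad hs ^^ 1) genY) +
      (\<Sum>r\<in>{1..w+b}. scal (bernoulli (2*r) / fact (2*r)) * component (Suc w) b ((ad hs ^^ (2*r)) genY))"
    using component_bern_op[OF order_ge_uminus[OF order_ge_hs] order_ge_genY, of "Suc w" b "w + b"]
    by (simp add: component_genY sign component_scal_mult component_uminus ad_neg scal_uminus)
  also have "\<dots> = scal (1/2) * ad (component (w + 1) (b - 1) hs) genY +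
      (\<Sum>r\<in>{1..w+b}. scal (bernoulli (2*r) / fact (2*r)) * (\<Sum>ps\<in>tuples r (w + 1) (b - 1). nested_ad ps genY))"
    by (simp only: brackets sum_lists_eq_tuples) (simp add: lists_eq_Suc_0)
  finally show ?thesis by (simp add: ad_antisym[of _ genY] scal_uminus)
qed

lemma coef_scal_mult_fun: "coef (scal c * x) = ncsmult c (coef x)"
  by (simp add: fun_eq_iff ncsmult_def)

lemma coef_ad_fun: "coef (ad x y) = bracket (coef x) (coef y)"
  by (simp add: fun_eq_iff bracket_def ad_def coef_mult)

lemma coef_add_fun: "coef (x + y) = coef x + coef y"
  by (simp add: fun_eq_iff)

lemma coef_sum_fun: "coef (sum f A) = (\<Sum>x\<in>A. coef (f x))"
proof -
  have "(\<Sum>x\<in>A. g x) u = (\<Sum>x\<in>A. (g x u :: rat))" for g :: "_ \<Rightarrow> ncs" and u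
    by (induction A rule: infinite_finite_induct) auto
  then show ?thesis by (simp add: fun_eq_iff)
qed

lemma coef_component_hs: "coef (component w b hs) = H w b"
proof -
  have "cnt False u = length (filter Not u)" "cnt True u = length (filter id u)" for u
    unfolding cnt_def by (induction u) auto
  then show ?thesis by (simp add: fun_eq_iff coef_component H_def hs_def)
qed

lemma coef_nested_ad: "coef (nested_ad ps Z) = nested ps (coef Z)"
  by (induction ps) (simp_all add: nested_def coef_ad_fun coef_component_hs)

lemma recursion_X:
  assumes "w + b \<ge> 1"
  shows "ncsmult (of_nat (w + 1)) (H (w + 1) b) =
           ncsmult (1/2) (bracket ncX (H w b)) +
           (\<Sum>r\<in>{1..w+b}. ncsmult (bernoulli (2*r) / fact (2*r)) (\<Sum>ps\<in>tuples r w b. nested ps ncX))"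
  using arg_cong[where f = coef, OF recursion_X_nc[OF assms]]
  by (simp only: coef_scal_mult_fun coef_ad_fun coef_add_fun coef_sum_fun coef_component_hs
      coef_nested_ad coef_Abs genX_def)

lemma recursion_Y:
  assumes "b \<ge> 1"
  shows "ncsmult (of_nat b) (H (w + 1) b) =
           ncsmult (-1/2) (bracket ncY (H (w + 1) (b - 1))) +
           (\<Sum>r\<in>{1..w+b}. ncsmult (bernoulli (2*r) / fact (2*r))
               (\<Sum>ps\<in>tuples r (w + 1) (b - 1). nested ps ncY))"
  using arg_cong[where f = coef, OF recursion_Y_nc[OF assms]]
  by (simp only: coef_scal_mult_fun coef_ad_fun coef_add_fun coef_sum_fun coef_component_hs
      coef_nested_ad coef_Abs genY_def)

theorem proposition5p4:
  shows "(\<forall>w b. w + b \<ge> 1 \<longrightarrow>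
           ncsmult (of_nat (w + 1)) (H (w + 1) b) =
             ncsmult (1/2) (bracket ncX (H w b)) +
             (\<Sum>r\<in>{1..w+b}. ncsmult (bernoulli (2*r) / fact (2*r))
                 (\<Sum>ps\<in>tuples r w b. nested ps ncX))) \<and>
         (\<forall>w b. b \<ge> 1 \<longrightarrow>
           ncsmult (of_nat b) (H (w + 1) b) =
             ncsmult (-1/2) (bracket ncY (H (w + 1) (b - 1))) +
             (\<Sum>r\<in>{1..w+b}. ncsmult (bernoulli (2*r) / fact (2*r))
                 (\<Sum>ps\<in>tuples r (w + 1) (b - 1). nested ps ncY)))"
  using recursion_X recursion_Y by blast

end
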